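(* An $[n,k]_q$ code $C$ is GI-reducible if and only if $C$ is LCD, or $\dim(\mathrm{Hull}(C)) = 1$ and $x \in \mathrm{Hull}(C)$ satisfies $(x,\mathbf{1}) \neq 0$.
   Context: Let $\mathbb{F}_q$ be a finite field and $C \subseteq \mathbb{F}_q^n$ a linear $[n,k]_q$ code. $(x,y)=\sum_i x_i y_i$ denotes the standard inner product, $\mathbf{1}$ the all-ones vector, $C^\perp$ the dual code with respect to the standard inner product, and $\mathrm{Hull}(C) = C \cap C^\perp$ the hull of $C$; $C$ is LCD if $\mathrm{Hull}(C)=\{0\}$. For a nondegenerate symmetric matrix $M$, a code $C$ with generator matrix $G$ is $M$-LCD if $GMG^T$ is nonsingular, and then $\Pi_{C,M} = MG^T(GMG^T)^{-1}G$ is its $M$-orthogonal projector. Two codes are permutation-equivalent ($C_1 \cong C_2$) if $C_2 = C_1P$ for a permutation matrix $P$, and $\Pi_{C_1,M} \cong \Pi_{C_2,M}$ means $\Pi_{C_2,M} = P^T\Pi_{C_1,M}P$ for some permutation matrix $P$. Let $J$ be the all-ones matrix. A code $C$ is called GI-reducible if there exists a nondegenerate symmetric structure matrix $M = aI + bJ$ (i.e. $a \neq 0$ and $a+nb \neq 0$ in $\mathbb{F}_q$) such that every code in the permutation class of $C$ is $M$-LCD and $C_1 \cong C_2 \iff \Pi_{C_1,M} \cong \Pi_{C_2,M}$ holds for all $C_1, C_2$ in that class. *)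

theory Defs
  imports "Jordan_Normal_Form.Gauss_Jordan_Elimination" "HOL-Combinatorics.Permutations"
begin

definition row_mult :: "'a::comm_semiring_0 vec \<Rightarrow> 'a mat \<Rightarrow> 'a vec" where
  "row_mult x A = transpose_mat A *\<^sub>v x"

definition gen_matrix :: "nat \<Rightarrow> nat \<Rightarrow> 'a::field mat \<Rightarrow> 'a vec set \<Rightarrow> bool" where
  "gen_matrix n k G C \<longleftrightarrow> G \<in> carrier_mat k n
     \<and> inj_on (\<lambda>u. row_mult u G) (carrier_vec k)
     \<and> C = (\<lambda>u. row_mult u G) ` carrier_vec k"

definition linear_code :: "nat \<Rightarrow> nat \<Rightarrow> 'a::field vec set \<Rightarrow> bool" where
  "linear_code n k C \<longleftrightarrow> (\<exists>G. gen_matrix n k G C)"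

definition ones_vec :: "nat \<Rightarrow> 'a::one vec" where
  "ones_vec n = vec n (\<lambda>_. 1)"

definition ones_mat :: "nat \<Rightarrow> 'a::one mat" where
  "ones_mat n = mat n n (\<lambda>_. 1)"

definition dual_code :: "nat \<Rightarrow> 'a::field vec set \<Rightarrow> 'a vec set" where
  "dual_code n C = {y \<in> carrier_vec n. \<forall>x\<in>C. x \<bullet> y = 0}"

definition code_hull :: "nat \<Rightarrow> 'a::field vec set \<Rightarrow> 'a vec set" where
  "code_hull n C = C \<inter> dual_code n C"

definition LCD :: "nat \<Rightarrow> 'a::field vec set \<Rightarrow> bool" where
  "LCD n C \<longleftrightarrow> code_hull n C = {0\<^sub>v n}"

(* C is M-LCD: G M G^T is nonsingular for a generator matrix G of C
  (this does not depend on the choice of G). *)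
definition M_LCD :: "nat \<Rightarrow> 'a::field mat \<Rightarrow> 'a vec set \<Rightarrow> bool" where
  "M_LCD n M C \<longleftrightarrow> (\<exists>k G. gen_matrix n k G C \<and> invertible_mat (G * M * transpose_mat G))"

definition proj :: "nat \<Rightarrow> 'a::field mat \<Rightarrow> 'a vec set \<Rightarrow> 'a mat" where
  "proj n M C = (let G = (SOME G. \<exists>k. gen_matrix n k G C) in
      M * transpose_mat G * the (mat_inverse (G * M * transpose_mat G)) * G)"

definition perm_mat :: "nat \<Rightarrow> (nat \<Rightarrow> nat) \<Rightarrow> 'a::{zero,one} mat" where
  "perm_mat n p = mat n n (\<lambda>(i,j). if p i = j then 1 else 0)"

definition is_perm_mat :: "nat \<Rightarrow> 'a::{zero,one} mat \<Rightarrow> bool" where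
  "is_perm_mat n P \<longleftrightarrow> (\<exists>p. p permutes {..<n} \<and> P = perm_mat n p)"

definition code_perm :: "'a::field vec set \<Rightarrow> 'a mat \<Rightarrow> 'a vec set" where
  "code_perm C P = (\<lambda>x. row_mult x P) ` C"

definition perm_equiv :: "nat \<Rightarrow> 'a::field vec set \<Rightarrow> 'a vec set \<Rightarrow> bool" where
  "perm_equiv n C1 C2 \<longleftrightarrow> (\<exists>P. is_perm_mat n P \<and> C2 = code_perm C1 P)"

definition perm_class :: "nat \<Rightarrow> 'a::field vec set \<Rightarrow> 'a vec set set" where
  "perm_class n C = {code_perm C P | P. is_perm_mat n P}"

definition proj_equiv :: "nat \<Rightarrow> 'a::field mat \<Rightarrow> 'a mat \<Rightarrow> bool" where
  "proj_equiv n A B \<longleftrightarrow> (\<exists>P. is_perm_mat n P \<and> B = transpose_mat P * A * P)"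

definition GI_reducible :: "nat \<Rightarrow> 'a::field vec set \<Rightarrow> bool" where
  "GI_reducible n C \<longleftrightarrow> (\<exists>a b::'a. a \<noteq> 0 \<and> a + of_nat n * b \<noteq> 0 \<and>
     (let M = a \<cdot>\<^sub>m 1\<^sub>m n + b \<cdot>\<^sub>m ones_mat n in
       (\<forall>C'\<in>perm_class n C. M_LCD n M C') \<and>
       (\<forall>C1\<in>perm_class n C. \<forall>C2\<in>perm_class n C.
          perm_equiv n C1 C2 \<longleftrightarrow> proj_equiv n (proj n M C1) (proj n M C2))))"

end

theory Submission
  imports Defs "Jordan_Normal_Form.Determinant"
begin

(* For M = aI + bJ the form x M y^T = a (x,y) + b (x,1)(y,1) is symmetric and invariant under
   coordinate permutations. If it is nondegenerate on C (i.e. C is M-LCD), the M-orthogonal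
   projector onto C is the unique matrix Q with xQ in C and x - xQ M-orthogonal to C; this
   characterisation is transported by permutations, so the projector of CP is P^T Q P, and Q
   recovers C as its row space. Hence the isomorphism condition holds automatically and C is
   GI-reducible iff the form is nondegenerate on C for some admissible a, b.
   A hull vector x with (x,1) = 0 lies in the radical of every such form, so nondegeneracy
   forces Hull(C) to meet the hyperplane (x,1) = 0 trivially: Hull(C) is 0 or a line spanned by
   a vector with (x,1) <> 0. Conversely M = I works for LCD codes, and if Hull(C) = <h> with
   (h,1) <> 0 then M = I + bJ works for any b <> 0 with 1 + nb <> 0. Such b exists unless the
   field is GF(2), where c^2 = c gives (h,1) = (h,h) = 0. *)

lemma row_mult_carrier[simp]:
  "A \<in> carrier_mat k n \<Longrightarrow> u \<in> carrier_vec k \<Longrightarrow> row_mult u A \<in> carrier_vec n"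
  unfolding row_mult_def by auto

lemma row_mult_mult:
  fixes A :: "'a::comm_semiring_0 mat"
  assumes "A \<in> carrier_mat a b" "B \<in> carrier_mat b c" "x \<in> carrier_vec a"
  shows "row_mult x (A * B) = row_mult (row_mult x A) B"
  unfolding row_mult_def using assms by (simp add: transpose_mult)

lemma row_mult_scalar_prod:
  fixes A :: "'a::comm_semiring_0 mat"
  assumes "A \<in> carrier_mat k n" "u \<in> carrier_vec k" "z \<in> carrier_vec n"
  shows "row_mult u A \<bullet> z = u \<bullet> (A *\<^sub>v z)"
  unfolding row_mult_def by (rule transpose_vec_mult_scalar[OF assms(1,3,2)])

lemma row_mult_minus:
  fixes A :: "'a::comm_ring mat"
  assumes "A \<in> carrier_mat k n" "u \<in> carrier_vec k" "v \<in> carrier_vec k"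
  shows "row_mult (u - v) A = row_mult u A - row_mult v A"
  unfolding row_mult_def using assms by (simp add: mult_minus_distrib_mat_vec)

lemma row_mult_smult:
  fixes A :: "'a::field mat"
  assumes "A \<in> carrier_mat k n" "u \<in> carrier_vec k"
  shows "row_mult (t \<cdot>\<^sub>v u) A = t \<cdot>\<^sub>v row_mult u A"
  unfolding row_mult_def using assms by (simp add: mult_mat_vec)

lemma row_mult_carrier_mat_1:
  fixes A :: "'a::comm_semiring_0 mat"
  assumes A: "A \<in> carrier_mat 1 n" and u: "u \<in> carrier_vec 1"
  shows "row_mult u A = (u $ 0) \<cdot>\<^sub>v row A 0"
proof (rule eq_vecI)
  fix j assume "j < dim_vec ((u $ 0) \<cdot>\<^sub>v row A 0)"
  then show "row_mult u A $ j = ((u $ 0) \<cdot>\<^sub>v row A 0) $ j"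
    using assms unfolding row_mult_def by (simp add: scalar_prod_def mult.commute)
qed (use assms in \<open>simp add: row_mult_def\<close>)

lemma index_row_mult_unit_vec:
  fixes A :: "'a::comm_semiring_1 mat"
  assumes "A \<in> carrier_mat n n" "i < n" "j < n"
  shows "row_mult (unit_vec n i) A $ j = A $$ (i, j)"
  unfolding row_mult_def using assms by (simp add: scalar_prod_right_unit)

lemma minus_vec_eq_zero_iff:
  fixes x :: "'a::ab_group_add vec"
  assumes "x \<in> carrier_vec n" "y \<in> carrier_vec n"
  shows "x - y = 0\<^sub>v n \<longleftrightarrow> x = y"
proof
  assume "x - y = 0\<^sub>v n"
  then have "(x - y) $ i = 0" if "i < n" for i
    using that by simp
  then show "x = y" using assms by (intro eq_vecI) auto
qed (use assms in simp)

lemma gen_matrixD: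
  assumes "gen_matrix n k G C"
  shows "G \<in> carrier_mat k n" "C = (\<lambda>u. row_mult u G) ` carrier_vec k"
    "inj_on (\<lambda>u. row_mult u G) (carrier_vec k)"
  using assms unfolding gen_matrix_def by auto

lemma gen_matrix_subset_carrier: "gen_matrix n k G C \<Longrightarrow> C \<subseteq> carrier_vec n"
  unfolding gen_matrix_def by auto

lemma gen_matrix_zero_mem:
  assumes "gen_matrix n k G C"
  shows "0\<^sub>v n \<in> C"
proof -
  have "row_mult (0\<^sub>v k) G = 0\<^sub>v n"
    using gen_matrixD(1)[OF assms] unfolding row_mult_def by auto
  then show ?thesis using gen_matrixD(2)[OF assms] by (metis image_eqI zero_carrier_vec)
qed

lemma gen_matrix_diff_mem:
  assumes g: "gen_matrix n k G C" and "x \<in> C" "y \<in> C"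
  shows "x - y \<in> C"
proof -
  obtain u v where uv: "u \<in> carrier_vec k" "v \<in> carrier_vec k" "x = row_mult u G" "y = row_mult v G"
    using assms gen_matrixD(2)[OF g] by auto
  then have "x - y = row_mult (u - v) G"
    using row_mult_minus[OF gen_matrixD(1)[OF g]] by simp
  then show ?thesis using gen_matrixD(2)[OF g] uv by auto
qed

lemma gen_matrix_smult_mem:
  assumes g: "gen_matrix n k G C" and "x \<in> C"
  shows "t \<cdot>\<^sub>v x \<in> C"
proof -
  obtain u where u: "u \<in> carrier_vec k" "x = row_mult u G"
    using assms gen_matrixD(2)[OF g] by auto
  then have "t \<cdot>\<^sub>v x = row_mult (t \<cdot>\<^sub>v u) G"
    using row_mult_smult[OF gen_matrixD(1)[OF g]] by simp
  then show ?thesis using gen_matrixD(2)[OF g] u by auto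
qed

lemma gen_matrix_mult_vec_eq_zero_iff:
  fixes G :: "'a::field mat"
  assumes g: "gen_matrix n k G C" and z: "z \<in> carrier_vec n"
  shows "G *\<^sub>v z = 0\<^sub>v k \<longleftrightarrow> (\<forall>x\<in>C. x \<bullet> z = 0)"
proof -
  have G: "G \<in> carrier_mat k n" and C: "C = (\<lambda>u. row_mult u G) ` carrier_vec k"
    using gen_matrixD[OF g] by auto
  show ?thesis
  proof
    assume "G *\<^sub>v z = 0\<^sub>v k"
    then show "\<forall>x\<in>C. x \<bullet> z = 0" using C row_mult_scalar_prod[OF G _ z] by auto
  next
    assume orth: "\<forall>x\<in>C. x \<bullet> z = 0"
    show "G *\<^sub>v z = 0\<^sub>v k"
    proof (rule eq_vecI)
      fix i assume "i < dim_vec (0\<^sub>v k :: 'a vec)"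
      then have i: "i < k" by simp
      have "(G *\<^sub>v z) $ i = row_mult (unit_vec k i) G \<bullet> z"
        using row_mult_scalar_prod[OF G _ z, of "unit_vec k i"] i G z by simp
      also have "\<dots> = 0" using orth C by auto
      finally show "(G *\<^sub>v z) $ i = 0\<^sub>v k $ i" using i by simp
    qed (use G in auto)
  qed
qed

lemma invertible_mat_iff_Units:
  fixes K :: "'a::semiring_1 mat"
  assumes K: "K \<in> carrier_mat k k"
  shows "invertible_mat K \<longleftrightarrow> K \<in> Units (ring_mat TYPE('a) k b)"
proof
  assume "invertible_mat K"
  then obtain B where KB: "K * B = 1\<^sub>m k" and BK: "B * K = 1\<^sub>m (dim_row B)"
    unfolding invertible_mat_def inverts_mat_def using K by auto
  then have "B \<in> carrier_mat k k"
    using K by (metis carrier_matD carrier_matI index_mult_mat(2,3) index_one_mat(2,3))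
  then show "K \<in> Units (ring_mat TYPE('a) k b)"
    using K KB BK unfolding Units_def ring_mat_simps by auto
next
  assume "K \<in> Units (ring_mat TYPE('a) k b)"
  then show "invertible_mat K"
    using K unfolding Units_def ring_mat_simps invertible_mat_def inverts_mat_def by auto
qed

lemma invertible_mat_iff_trivial_kernel:
  fixes K :: "'a::field mat"
  assumes K: "K \<in> carrier_mat k k"
  shows "invertible_mat K \<longleftrightarrow> (\<forall>u\<in>carrier_vec k. K *\<^sub>v u = 0\<^sub>v k \<longrightarrow> u = 0\<^sub>v k)"
proof -
  have "invertible_mat K \<longleftrightarrow> det K \<noteq> 0"
    unfolding invertible_mat_iff_Units[OF K, of "()"]
    using unit_imp_det_non_zero[of K k "()"] det_non_zero_imp_unit[OF K, of "()"] by blast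
  then show ?thesis unfolding det_0_iff_vec_prod_zero[OF K] by auto
qed

lemma mat_inverse_invertible:
  fixes K :: "'a::field mat"
  assumes K: "K \<in> carrier_mat k k" and inv: "invertible_mat K"
  obtains B where "mat_inverse K = Some B" "B * K = 1\<^sub>m k" "B \<in> carrier_mat k k"
proof -
  have "mat_inverse K \<noteq> None"
    using mat_inverse(1)[OF K, of "()"] inv unfolding invertible_mat_iff_Units[OF K, of "()"] by blast
  then show ?thesis using mat_inverse(2)[OF K] that by auto
qed

definition nondegenerate_on :: "nat \<Rightarrow> 'a::semiring_0 mat \<Rightarrow> 'a vec set \<Rightarrow> bool" where
  "nondegenerate_on n M C \<longleftrightarrow> (\<forall>y\<in>C. (\<forall>x\<in>C. x \<bullet> (M *\<^sub>v y) = 0) \<longrightarrow> y = 0\<^sub>v n)"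

lemma invertible_gram_iff_nondegenerate:
  fixes G M :: "'a::field mat"
  assumes g: "gen_matrix n k G C" and M: "M \<in> carrier_mat n n"
  shows "invertible_mat (G * M * transpose_mat G) \<longleftrightarrow> nondegenerate_on n M C"
proof -
  have G: "G \<in> carrier_mat k n" and C: "C = (\<lambda>u. row_mult u G) ` carrier_vec k"
    and inj: "inj_on (\<lambda>u. row_mult u G) (carrier_vec k)"
    using gen_matrixD[OF g] by auto
  have gram_mult: "(G * M * transpose_mat G) *\<^sub>v u = G *\<^sub>v (M *\<^sub>v row_mult u G)"
    if "u \<in> carrier_vec k" for u
  proof -
    have "(G * M * transpose_mat G) *\<^sub>v u = (G * M) *\<^sub>v (transpose_mat G *\<^sub>v u)"
      using G M that by (intro assoc_mult_mat_vec) auto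
    also have "\<dots> = G *\<^sub>v (M *\<^sub>v (transpose_mat G *\<^sub>v u))"
      using G M that by (intro assoc_mult_mat_vec) auto
    finally show ?thesis unfolding row_mult_def .
  qed
  have zero: "row_mult (0\<^sub>v k) G = 0\<^sub>v n" using G unfolding row_mult_def by auto
  have row_mult_eq_zero: "row_mult u G = 0\<^sub>v n \<longleftrightarrow> u = 0\<^sub>v k" if "u \<in> carrier_vec k" for u
    using inj_onD[OF inj _ that zero_carrier_vec] zero by auto
  have kernel: "(G * M * transpose_mat G) *\<^sub>v u = 0\<^sub>v k \<longleftrightarrow> (\<forall>x\<in>C. x \<bullet> (M *\<^sub>v row_mult u G) = 0)"
    if "u \<in> carrier_vec k" for u
    using gram_mult[OF that] gen_matrix_mult_vec_eq_zero_iff[OF g, of "M *\<^sub>v row_mult u G"] G M that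
    by simp
  have K: "G * M * transpose_mat G \<in> carrier_mat k k" using G M by auto
  show ?thesis
    unfolding invertible_mat_iff_trivial_kernel[OF K] nondegenerate_on_def
  proof (intro iffI ballI impI)
    fix y assume trivial: "\<forall>u\<in>carrier_vec k. (G * M * transpose_mat G) *\<^sub>v u = 0\<^sub>v k \<longrightarrow> u = 0\<^sub>v k"
      and "y \<in> C" and orth: "\<forall>x\<in>C. x \<bullet> (M *\<^sub>v y) = 0"
    then obtain u where u: "u \<in> carrier_vec k" "y = row_mult u G" using C by auto
    then show "y = 0\<^sub>v n" using trivial kernel[OF u(1)] orth row_mult_eq_zero[OF u(1)] by simp
  next
    fix u assume nd: "\<forall>y\<in>C. (\<forall>x\<in>C. x \<bullet> (M *\<^sub>v y) = 0) \<longrightarrow> y = 0\<^sub>v n"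
      and u: "u \<in> carrier_vec k" and "(G * M * transpose_mat G) *\<^sub>v u = 0\<^sub>v k"
    moreover have "row_mult u G \<in> C" using C u by blast
    ultimately have "row_mult u G = 0\<^sub>v n" using kernel[OF u] by blast
    then show "u = 0\<^sub>v k" using row_mult_eq_zero[OF u] by simp
  qed
qed

lemma M_LCD_iff_nondegenerate:
  fixes M :: "'a::field mat"
  assumes "gen_matrix n k G C" "M \<in> carrier_mat n n"
  shows "M_LCD n M C \<longleftrightarrow> nondegenerate_on n M C"
proof
  assume "M_LCD n M C"
  then obtain k' G' where "gen_matrix n k' G' C" "invertible_mat (G' * M * transpose_mat G')"
    unfolding M_LCD_def by blast
  then show "nondegenerate_on n M C" using invertible_gram_iff_nondegenerate assms(2) by blast
next
  assume "nondegenerate_on n M C"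
  then show "M_LCD n M C"
    unfolding M_LCD_def using invertible_gram_iff_nondegenerate[OF assms] assms(1) by blast
qed

lemma scalar_prod_mult_vec_symmetric:
  fixes M :: "'a::comm_semiring_0 mat"
  assumes "M \<in> carrier_mat n n" "transpose_mat M = M" "x \<in> carrier_vec n" "y \<in> carrier_vec n"
  shows "x \<bullet> (M *\<^sub>v y) = y \<bullet> (M *\<^sub>v x)"
proof -
  have "y \<bullet> (M *\<^sub>v x) = (transpose_mat M *\<^sub>v y) \<bullet> x"
    using transpose_vec_mult_scalar[of M n n x y] assms by simp
  also have "\<dots> = x \<bullet> (M *\<^sub>v y)"
    using comm_scalar_prod[of "M *\<^sub>v y" n x] assms by simp
  finally show ?thesis by simp
qed

lemma left_orthogonal_eq_zero_if_nondegenerate: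
  fixes M :: "'a::comm_semiring_0 mat"
  assumes nd: "nondegenerate_on n M C" and M: "M \<in> carrier_mat n n" "transpose_mat M = M"
    and C: "C \<subseteq> carrier_vec n" and d: "d \<in> C"
    and orth: "\<And>y. y \<in> C \<Longrightarrow> d \<bullet> (M *\<^sub>v y) = 0"
  shows "d = 0\<^sub>v n"
proof -
  have "x \<bullet> (M *\<^sub>v d) = 0" if "x \<in> C" for x
  proof -
    have "x \<in> carrier_vec n" "d \<in> carrier_vec n" using C d that by auto
    then show ?thesis using scalar_prod_mult_vec_symmetric[OF M] orth[OF that] by simp
  qed
  then show ?thesis using nd d unfolding nondegenerate_on_def by blast
qed

definition M_projector :: "nat \<Rightarrow> 'a::comm_ring mat \<Rightarrow> 'a vec set \<Rightarrow> 'a mat \<Rightarrow> bool" where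
  "M_projector n M C Q \<longleftrightarrow> Q \<in> carrier_mat n n \<and>
     (\<forall>x\<in>carrier_vec n. row_mult x Q \<in> C \<and> (\<forall>y\<in>C. (x - row_mult x Q) \<bullet> (M *\<^sub>v y) = 0))"

lemma M_projector_gram_inverse:
  fixes M G B :: "'a::field mat"
  assumes g: "gen_matrix n k G C" and M: "M \<in> carrier_mat n n"
    and B: "B \<in> carrier_mat k k" and left_inverse: "B * (G * M * transpose_mat G) = 1\<^sub>m k"
  shows "M_projector n M C (M * transpose_mat G * B * G)"
proof -
  have G: "G \<in> carrier_mat k n" and C: "C = (\<lambda>u. row_mult u G) ` carrier_vec k"
    using gen_matrixD[OF g] by auto
  define A where "A = M * transpose_mat G"
  define Q where "Q = A * B * G"
  have A: "A \<in> carrier_mat n k" and Q: "Q \<in> carrier_mat n n"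
    unfolding A_def Q_def using M G B by auto
  have "Q * A = (A * B) * (G * A)"
    unfolding Q_def by (rule assoc_mult_mat[of _ n k _ n _ k]) (use A B G in auto)
  also have "\<dots> = A * (B * (G * A))"
    by (rule assoc_mult_mat[of _ n k _ k _ k]) (use A B G in auto)
  also have "G * A = G * M * transpose_mat G"
    unfolding A_def using G M by (simp add: assoc_mult_mat[of _ k n _ n _ k])
  finally have QA: "Q * A = A" using left_inverse A by simp
  have "(x - row_mult x Q) \<bullet> (M *\<^sub>v y) = 0" if x: "x \<in> carrier_vec n" and "y \<in> C" for x y
  proof -
    obtain v where v: "v \<in> carrier_vec k" and y: "M *\<^sub>v y = A *\<^sub>v v"
      using \<open>y \<in> C\<close> C G M unfolding row_mult_def A_def by auto
    have "row_mult x Q \<bullet> (A *\<^sub>v v) = x \<bullet> ((Q * A) *\<^sub>v v)"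
      using row_mult_scalar_prod[OF Q x, of "A *\<^sub>v v"] A Q v by simp
    then show ?thesis
      unfolding y QA using minus_scalar_prod_distrib[of x n "row_mult x Q" "A *\<^sub>v v"] x A Q v by simp
  qed
  moreover have "row_mult x Q \<in> C" if "x \<in> carrier_vec n" for x
  proof -
    have "row_mult x Q = row_mult (row_mult x (A * B)) G"
      unfolding Q_def using A B G that by (intro row_mult_mult[of _ n k]) auto
    moreover have "row_mult x (A * B) \<in> carrier_vec k"
      using A B that by (intro row_mult_carrier[of _ n]) auto
    ultimately show ?thesis using C by blast
  qed
  ultimately show ?thesis unfolding M_projector_def Q_def A_def using Q[unfolded Q_def A_def] by blast
qed

lemma M_projector_proj:
  fixes M :: "'a::field mat"
  assumes g: "gen_matrix n k G C" and M: "M \<in> carrier_mat n n" and nd: "nondegenerate_on n M C"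
  shows "M_projector n M C (proj n M C)"
proof -
  define G' where "G' = (SOME G. \<exists>k. gen_matrix n k G C)"
  have "\<exists>k. gen_matrix n k G' C"
    unfolding G'_def by (rule someI_ex) (use g in blast)
  then obtain k' where g': "gen_matrix n k' G' C" by blast
  have K: "G' * M * transpose_mat G' \<in> carrier_mat k' k'"
    using gen_matrixD(1)[OF g'] M by auto
  have "invertible_mat (G' * M * transpose_mat G')"
    using invertible_gram_iff_nondegenerate[OF g' M] nd by simp
  then obtain B where B: "mat_inverse (G' * M * transpose_mat G') = Some B"
    "B * (G' * M * transpose_mat G') = 1\<^sub>m k'" "B \<in> carrier_mat k' k'"
    by (rule mat_inverse_invertible[OF K])
  have "proj n M C = M * transpose_mat G' * B * G'"
    unfolding proj_def G'_def[symmetric] Let_def B(1) by simp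
  then show ?thesis using M_projector_gram_inverse[OF g' M B(3,2)] by simp
qed

lemma M_projector_fixes:
  fixes M :: "'a::field mat"
  assumes g: "gen_matrix n k G C" and M: "M \<in> carrier_mat n n" "transpose_mat M = M"
    and nd: "nondegenerate_on n M C" and Q: "M_projector n M C Q" and x: "x \<in> C"
  shows "row_mult x Q = x"
proof -
  have C: "C \<subseteq> carrier_vec n" by (rule gen_matrix_subset_carrier[OF g])
  have xQ: "row_mult x Q \<in> C" and orth: "\<And>y. y \<in> C \<Longrightarrow> (x - row_mult x Q) \<bullet> (M *\<^sub>v y) = 0"
    using Q x C unfolding M_projector_def by auto
  have "x - row_mult x Q = 0\<^sub>v n"
    using left_orthogonal_eq_zero_if_nondegenerate[OF nd M C gen_matrix_diff_mem[OF g x xQ] orth] .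
  moreover have "x \<in> carrier_vec n" "row_mult x Q \<in> carrier_vec n" using x xQ C by auto
  ultimately show ?thesis using minus_vec_eq_zero_iff by metis
qed

lemma M_projector_row_space:
  fixes M :: "'a::field mat"
  assumes g: "gen_matrix n k G C" and M: "M \<in> carrier_mat n n" "transpose_mat M = M"
    and nd: "nondegenerate_on n M C" and Q: "M_projector n M C Q"
  shows "(\<lambda>x. row_mult x Q) ` carrier_vec n = C"
proof
  show "(\<lambda>x. row_mult x Q) ` carrier_vec n \<subseteq> C" using Q unfolding M_projector_def by auto
  show "C \<subseteq> (\<lambda>x. row_mult x Q) ` carrier_vec n"
  proof
    fix x assume "x \<in> C"
    then have "x = row_mult x Q" "x \<in> carrier_vec n"
      using M_projector_fixes[OF assms] gen_matrix_subset_carrier[OF g] by auto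
    then show "x \<in> (\<lambda>x. row_mult x Q) ` carrier_vec n" by blast
  qed
qed

lemma M_projector_unique:
  fixes M :: "'a::field mat"
  assumes g: "gen_matrix n k G C" and M: "M \<in> carrier_mat n n" "transpose_mat M = M"
    and nd: "nondegenerate_on n M C"
    and Q1: "M_projector n M C Q1" and Q2: "M_projector n M C Q2"
  shows "Q1 = Q2"
proof -
  have C: "C \<subseteq> carrier_vec n" by (rule gen_matrix_subset_carrier[OF g])
  have Q1c: "Q1 \<in> carrier_mat n n" and Q2c: "Q2 \<in> carrier_mat n n"
    using Q1 Q2 unfolding M_projector_def by auto
  have rows: "row_mult x Q1 = row_mult x Q2" if x: "x \<in> carrier_vec n" for x
  proof -
    let ?a = "row_mult x Q1" and ?b = "row_mult x Q2"
    have ab: "?a \<in> C" "?b \<in> C" using Q1 Q2 x unfolding M_projector_def by auto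
    have "(?a - ?b) \<bullet> (M *\<^sub>v y) = 0" if "y \<in> C" for y
    proof -
      have My: "M *\<^sub>v y \<in> carrier_vec n" using M C that by auto
      have "(x - ?a) \<bullet> (M *\<^sub>v y) = 0" "(x - ?b) \<bullet> (M *\<^sub>v y) = 0"
        using Q1 Q2 x that unfolding M_projector_def by auto
      then show ?thesis
        using x Q1c Q2c My by (simp add: minus_scalar_prod_distrib[of _ n])
    qed
    then have "?a - ?b = 0\<^sub>v n"
      using left_orthogonal_eq_zero_if_nondegenerate[OF nd M C gen_matrix_diff_mem[OF g ab]] by blast
    then show ?thesis
      using minus_vec_eq_zero_iff[OF row_mult_carrier[OF Q1c x] row_mult_carrier[OF Q2c x]] by simp
  qed
  show ?thesis
  proof (rule eq_matI)
    fix i j assume "i < dim_row Q2" "j < dim_col Q2"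
    then have ij: "i < n" "j < n" using Q2c by auto
    have "Q1 $$ (i, j) = row_mult (unit_vec n i) Q1 $ j"
      using index_row_mult_unit_vec[OF Q1c ij] by simp
    also have "\<dots> = row_mult (unit_vec n i) Q2 $ j"
      using rows ij by simp
    also have "\<dots> = Q2 $$ (i, j)"
      by (rule index_row_mult_unit_vec[OF Q2c ij])
    finally show "Q1 $$ (i, j) = Q2 $$ (i, j)" .
  qed (use Q1c Q2c in auto)
qed

definition struct_mat :: "'a::comm_ring_1 \<Rightarrow> 'a \<Rightarrow> nat \<Rightarrow> 'a mat" where
  "struct_mat a b n = a \<cdot>\<^sub>m 1\<^sub>m n + b \<cdot>\<^sub>m ones_mat n"

lemma ones_vec_carrier[simp]: "ones_vec n \<in> carrier_vec n"
  unfolding ones_vec_def by auto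

lemma struct_mat_carrier[simp]: "struct_mat a b n \<in> carrier_mat n n"
  unfolding struct_mat_def ones_mat_def by auto

lemma transpose_struct_mat: "transpose_mat (struct_mat a b n) = struct_mat a b n"
  unfolding struct_mat_def ones_mat_def by (auto intro!: eq_matI)

lemma struct_mat_mult_vec:
  fixes y :: "'a::comm_ring_1 vec"
  assumes y: "y \<in> carrier_vec n"
  shows "struct_mat a b n *\<^sub>v y = a \<cdot>\<^sub>v y + (b * (y \<bullet> ones_vec n)) \<cdot>\<^sub>v ones_vec n"
proof (rule eq_vecI)
  fix i assume "i < dim_vec (a \<cdot>\<^sub>v y + (b * (y \<bullet> ones_vec n)) \<cdot>\<^sub>v ones_vec n)"
  then have i: "i < n" using y by (simp add: ones_vec_def)
  have "(struct_mat a b n *\<^sub>v y) $ i = (\<Sum>j = 0..<n. (a * (if i = j then 1 else 0) + b) * y $ j)"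
    using i y unfolding struct_mat_def ones_mat_def mult_mat_vec_def scalar_prod_def
    by (auto intro!: sum.cong)
  also have "\<dots> = (\<Sum>j = 0..<n. (if i = j then a * y $ j else 0) + b * y $ j)"
    by (rule sum.cong) (auto simp: algebra_simps)
  also have "\<dots> = a * y $ i + b * (\<Sum>j = 0..<n. y $ j)"
    using i by (simp add: sum.distrib sum_distrib_left)
  finally show "(struct_mat a b n *\<^sub>v y) $ i = (a \<cdot>\<^sub>v y + (b * (y \<bullet> ones_vec n)) \<cdot>\<^sub>v ones_vec n) $ i"
    using i y by (simp add: ones_vec_def scalar_prod_def)
qed (use y in \<open>auto simp: struct_mat_def ones_mat_def ones_vec_def\<close>)

lemma struct_mat_form:
  fixes x y :: "'a::comm_ring_1 vec"
  assumes x: "x \<in> carrier_vec n" and y: "y \<in> carrier_vec n"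
  shows "x \<bullet> (struct_mat a b n *\<^sub>v y) = a * (x \<bullet> y) + b * ((x \<bullet> ones_vec n) * (y \<bullet> ones_vec n))"
  unfolding struct_mat_mult_vec[OF y] using x y
  by (simp add: scalar_prod_add_distrib[of _ n])

definition perm_vec :: "(nat \<Rightarrow> nat) \<Rightarrow> nat \<Rightarrow> 'a vec \<Rightarrow> 'a vec" where
  "perm_vec p n x = vec n (\<lambda>j. x $ Hilbert_Choice.inv p j)"

lemma perm_vec_carrier[simp]: "perm_vec p n x \<in> carrier_vec n"
  unfolding perm_vec_def by auto

lemma permutes_inv_less:
  "p permutes {..<n} \<Longrightarrow> j < n \<Longrightarrow> Hilbert_Choice.inv p j < n"
  using permutes_inv permutes_in_image by fastforce

lemma perm_mat_carrier[simp]: "perm_mat n p \<in> carrier_mat n n"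
  unfolding perm_mat_def by auto

lemma row_mult_perm_mat:
  fixes x :: "'a::comm_semiring_1 vec"
  assumes p: "p permutes {..<n}" and x: "x \<in> carrier_vec n"
  shows "row_mult x (perm_mat n p) = perm_vec p n x"
proof (rule eq_vecI)
  fix j assume "j < dim_vec (perm_vec p n x)"
  then have j: "j < n" by (simp add: perm_vec_def)
  have "row_mult x (perm_mat n p) $ j = (\<Sum>i = 0..<n. if Hilbert_Choice.inv p j = i then x $ i else 0)"
    using j x unfolding row_mult_def perm_mat_def mult_mat_vec_def scalar_prod_def
    by (auto intro!: sum.cong simp: permutes_inv_eq[OF p])
  also have "\<dots> = x $ Hilbert_Choice.inv p j" using permutes_inv_less[OF p j] by simp
  finally show "row_mult x (perm_mat n p) $ j = perm_vec p n x $ j" using j by (simp add: perm_vec_def)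
qed (auto simp: row_mult_def perm_mat_def perm_vec_def)

lemma transpose_perm_mat:
  assumes "p permutes {..<n}"
  shows "transpose_mat (perm_mat n p :: 'a::{zero,one} mat) = perm_mat n (Hilbert_Choice.inv p)"
  unfolding perm_mat_def using permutes_inv_eq[OF assms] by (auto intro!: eq_matI)

lemma perm_vec_scalar_prod:
  fixes x y :: "'a::comm_semiring_0 vec"
  assumes p: "p permutes {..<n}" and x: "x \<in> carrier_vec n" and y: "y \<in> carrier_vec n"
  shows "perm_vec p n x \<bullet> perm_vec p n y = x \<bullet> y"
proof -
  have inv_p: "Hilbert_Choice.inv p permutes {0..<n}"
    using permutes_inv[OF p] by (simp add: atLeast0LessThan)
  have "perm_vec p n x \<bullet> perm_vec p n y = (\<Sum>i = 0..<n. x $ Hilbert_Choice.inv p i * y $ Hilbert_Choice.inv p i)"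
    unfolding perm_vec_def scalar_prod_def by simp
  also have "\<dots> = (\<Sum>i = 0..<n. x $ i * y $ i)"
    using sum.permute[OF inv_p, of "\<lambda>i. x $ i * y $ i"] by (simp add: comp_def)
  finally show ?thesis unfolding scalar_prod_def using y by simp
qed

lemma perm_vec_ones:
  assumes "p permutes {..<n}"
  shows "perm_vec p n (ones_vec n) = ones_vec n"
  unfolding perm_vec_def ones_vec_def using permutes_inv_less[OF assms] by (auto intro!: eq_vecI)

lemma perm_vec_zero:
  assumes "p permutes {..<n}"
  shows "perm_vec p n (0\<^sub>v n) = 0\<^sub>v n"
  unfolding perm_vec_def using permutes_inv_less[OF assms] by (auto intro!: eq_vecI)

lemma perm_vec_minus:
  fixes x y :: "'a::ab_group_add vec"
  assumes "p permutes {..<n}" "x \<in> carrier_vec n" "y \<in> carrier_vec n"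
  shows "perm_vec p n (x - y) = perm_vec p n x - perm_vec p n y"
  unfolding perm_vec_def using assms permutes_inv_less[OF assms(1)] by (auto intro!: eq_vecI)

lemma perm_vec_inv_perm_vec:
  assumes p: "p permutes {..<n}" and x: "x \<in> carrier_vec n"
  shows "perm_vec (Hilbert_Choice.inv p) n (perm_vec p n x) = x"
    and "perm_vec p n (perm_vec (Hilbert_Choice.inv p) n x) = x"
  unfolding perm_vec_def
  using x permutes_inv_less[OF p] permutes_in_image[OF p] permutes_inv[OF p] p
  by (auto intro!: eq_vecI simp: inv_inv_eq permutes_bij permutes_inverses)

lemma inj_on_perm_vec:
  assumes "p permutes {..<n}"
  shows "inj_on (perm_vec p n) (carrier_vec n)"
  by (rule inj_onI) (metis perm_vec_inv_perm_vec(1)[OF assms])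

lemma perm_vec_id: "x \<in> carrier_vec n \<Longrightarrow> perm_vec id n x = x"
  unfolding perm_vec_def by (auto intro!: eq_vecI simp: inv_id)

lemma struct_mat_form_perm_vec:
  fixes x y :: "'a::comm_ring_1 vec"
  assumes p: "p permutes {..<n}" and x: "x \<in> carrier_vec n" and y: "y \<in> carrier_vec n"
  shows "perm_vec p n x \<bullet> (struct_mat a b n *\<^sub>v perm_vec p n y) = x \<bullet> (struct_mat a b n *\<^sub>v y)"
proof -
  have ones: "perm_vec p n z \<bullet> ones_vec n = z \<bullet> ones_vec n" if "z \<in> carrier_vec n" for z :: "'a vec"
    using perm_vec_scalar_prod[OF p that ones_vec_carrier] perm_vec_ones[OF p, where 'a = 'a] by simp
  show ?thesis
    unfolding struct_mat_form[OF perm_vec_carrier perm_vec_carrier] struct_mat_form[OF x y]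
      ones[OF x] ones[OF y] perm_vec_scalar_prod[OF p x y] ..
qed

lemma code_perm_perm_mat:
  fixes C :: "'a::field vec set"
  assumes p: "p permutes {..<n}" and C: "C \<subseteq> carrier_vec n"
  shows "code_perm C (perm_mat n p) = perm_vec p n ` C"
  unfolding code_perm_def using row_mult_perm_mat[OF p] C by (auto intro!: image_cong)

lemma gen_matrix_perm:
  fixes G :: "'a::field mat"
  assumes g: "gen_matrix n k G C" and p: "p permutes {..<n}"
  shows "gen_matrix n k (G * perm_mat n p) (perm_vec p n ` C)"
proof -
  have G: "G \<in> carrier_mat k n" and C: "C = (\<lambda>u. row_mult u G) ` carrier_vec k"
    and inj: "inj_on (\<lambda>u. row_mult u G) (carrier_vec k)"
    using gen_matrixD[OF g] by auto
  have eq: "row_mult u (G * perm_mat n p) = perm_vec p n (row_mult u G)" if "u \<in> carrier_vec k" for u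
    using row_mult_mult[OF G perm_mat_carrier that] row_mult_perm_mat[OF p row_mult_carrier[OF G that]]
    by simp
  have "inj_on (\<lambda>u. row_mult u (G * perm_mat n p)) (carrier_vec k)"
  proof (rule inj_onI)
    fix u v assume u: "u \<in> carrier_vec k" and v: "v \<in> carrier_vec k"
      and "row_mult u (G * perm_mat n p) = row_mult v (G * perm_mat n p)"
    then have "perm_vec p n (row_mult u G) = perm_vec p n (row_mult v G)" using eq by simp
    then have "row_mult u G = row_mult v G"
      using inj_onD[OF inj_on_perm_vec[OF p]] row_mult_carrier[OF G u] row_mult_carrier[OF G v] by blast
    then show "u = v" using inj_onD[OF inj] u v by blast
  qed
  moreover have "(\<lambda>u. row_mult u (G * perm_mat n p)) ` carrier_vec k = perm_vec p n ` C"
    unfolding C image_image using eq by simp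
  moreover have "G * perm_mat n p \<in> carrier_mat k n"
    using G by (intro mult_carrier_mat) auto
  ultimately show ?thesis unfolding gen_matrix_def by blast
qed

lemma nondegenerate_on_perm:
  fixes C :: "'a::comm_ring_1 vec set"
  assumes p: "p permutes {..<n}" and C: "C \<subseteq> carrier_vec n"
    and nd: "nondegenerate_on n (struct_mat a b n) C"
  shows "nondegenerate_on n (struct_mat a b n) (perm_vec p n ` C)"
  unfolding nondegenerate_on_def
proof (intro ballI impI)
  fix y' assume "y' \<in> perm_vec p n ` C"
  then obtain y where y: "y \<in> C" and y': "y' = perm_vec p n y" by auto
  assume orth: "\<forall>x\<in>perm_vec p n ` C. x \<bullet> (struct_mat a b n *\<^sub>v y') = 0"
  have "x \<bullet> (struct_mat a b n *\<^sub>v y) = 0" if "x \<in> C" for x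
  proof -
    have xy: "x \<in> carrier_vec n" "y \<in> carrier_vec n" using C that y by auto
    have "perm_vec p n x \<bullet> (struct_mat a b n *\<^sub>v perm_vec p n y) = 0" using orth that y' by blast
    then show ?thesis using struct_mat_form_perm_vec[OF p xy] by simp
  qed
  then have "y = 0\<^sub>v n" using nd y unfolding nondegenerate_on_def by blast
  then show "y' = 0\<^sub>v n" using y' perm_vec_zero[OF p] by simp
qed

lemma M_projector_perm:
  fixes Q :: "'a::field mat"
  assumes p: "p permutes {..<n}" and C: "C \<subseteq> carrier_vec n"
    and Q: "M_projector n (struct_mat a b n) C Q"
  shows "M_projector n (struct_mat a b n) (perm_vec p n ` C) (transpose_mat (perm_mat n p) * Q * perm_mat n p)"
proof -
  let ?P = "perm_mat n p :: 'a mat" and ?M = "struct_mat a b n" and ?p' = "Hilbert_Choice.inv p"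
  have Qc: "Q \<in> carrier_mat n n" using Q unfolding M_projector_def by auto
  have row_mult_conj: "row_mult x (transpose_mat ?P * Q * ?P) = perm_vec p n (row_mult (perm_vec ?p' n x) Q)"
    if x: "x \<in> carrier_vec n" for x
  proof -
    have "row_mult x (transpose_mat ?P * Q * ?P) = row_mult (row_mult x (transpose_mat ?P * Q)) ?P"
      by (rule row_mult_mult[of _ n n _ n]) (use Qc x in \<open>auto intro!: mult_carrier_mat\<close>)
    also have "row_mult x (transpose_mat ?P * Q) = row_mult (row_mult x (transpose_mat ?P)) Q"
      by (rule row_mult_mult[of _ n n _ n]) (use Qc x in \<open>auto intro!: mult_carrier_mat\<close>)
    also have "row_mult x (transpose_mat ?P) = perm_vec ?p' n x"
      unfolding transpose_perm_mat[OF p] by (rule row_mult_perm_mat[OF permutes_inv[OF p] x])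
    finally show ?thesis using row_mult_perm_mat[OF p row_mult_carrier[OF Qc perm_vec_carrier]] by simp
  qed
  show ?thesis unfolding M_projector_def
  proof (intro conjI ballI)
    show "transpose_mat ?P * Q * ?P \<in> carrier_mat n n"
      by (intro mult_carrier_mat[of _ n n]) (auto simp: Qc)
    fix x :: "'a vec" assume x: "x \<in> carrier_vec n"
    let ?x' = "perm_vec ?p' n x"
    have "row_mult ?x' Q \<in> C" and orth: "\<And>y. y \<in> C \<Longrightarrow> (?x' - row_mult ?x' Q) \<bullet> (?M *\<^sub>v y) = 0"
      using Q unfolding M_projector_def by auto
    then show "row_mult x (transpose_mat ?P * Q * ?P) \<in> perm_vec p n ` C"
      unfolding row_mult_conj[OF x] by blast
    fix y assume "y \<in> perm_vec p n ` C"
    then obtain y0 where y0: "y0 \<in> C" and y: "y = perm_vec p n y0" by auto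
    have diff: "x - row_mult x (transpose_mat ?P * Q * ?P) = perm_vec p n (?x' - row_mult ?x' Q)"
      unfolding row_mult_conj[OF x] perm_vec_minus[OF p perm_vec_carrier row_mult_carrier[OF Qc perm_vec_carrier]]
      using perm_vec_inv_perm_vec(2)[OF p x] by simp
    have "(x - row_mult x (transpose_mat ?P * Q * ?P)) \<bullet> (?M *\<^sub>v y) = (?x' - row_mult ?x' Q) \<bullet> (?M *\<^sub>v y0)"
      unfolding diff y using y0 C Qc by (intro struct_mat_form_perm_vec[OF p]) auto
    then show "(x - row_mult x (transpose_mat ?P * Q * ?P)) \<bullet> (?M *\<^sub>v y) = 0"
      using orth[OF y0] by simp
  qed
qed

lemma perm_equiv_iff_proj_equiv:
  fixes C1 C2 :: "'a::field vec set"
  assumes g1: "gen_matrix n k1 G1 C1" and g2: "gen_matrix n k2 G2 C2"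
    and nd1: "nondegenerate_on n (struct_mat a b n) C1"
    and nd2: "nondegenerate_on n (struct_mat a b n) C2"
  shows "perm_equiv n C1 C2 \<longleftrightarrow>
    proj_equiv n (proj n (struct_mat a b n) C1) (proj n (struct_mat a b n) C2)"
proof -
  let ?M = "struct_mat a b n"
  note M = struct_mat_carrier transpose_struct_mat
  have C1: "C1 \<subseteq> carrier_vec n" by (rule gen_matrix_subset_carrier[OF g1])
  have Q1: "M_projector n ?M C1 (proj n ?M C1)" by (rule M_projector_proj[OF g1 M(1) nd1])
  have Q2: "M_projector n ?M C2 (proj n ?M C2)" by (rule M_projector_proj[OF g2 M(1) nd2])
  show ?thesis
  proof
    assume "perm_equiv n C1 C2"
    then obtain p where p: "p permutes {..<n}" and "C2 = code_perm C1 (perm_mat n p)"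
      unfolding perm_equiv_def is_perm_mat_def by auto
    then have C2: "C2 = perm_vec p n ` C1" using code_perm_perm_mat[OF p C1] by simp
    have "M_projector n ?M C2 (transpose_mat (perm_mat n p) * proj n ?M C1 * perm_mat n p)"
      unfolding C2 by (rule M_projector_perm[OF p C1 Q1])
    then have "proj n ?M C2 = transpose_mat (perm_mat n p) * proj n ?M C1 * perm_mat n p"
      using M_projector_unique[OF g2 M nd2 Q2] by blast
    then show "proj_equiv n (proj n ?M C1) (proj n ?M C2)"
      unfolding proj_equiv_def is_perm_mat_def using p by blast
  next
    assume "proj_equiv n (proj n ?M C1) (proj n ?M C2)"
    then obtain p where p: "p permutes {..<n}"
      and conj: "proj n ?M C2 = transpose_mat (perm_mat n p) * proj n ?M C1 * perm_mat n p"
      unfolding proj_equiv_def is_perm_mat_def by auto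
    have "M_projector n ?M (perm_vec p n ` C1) (proj n ?M C2)"
      unfolding conj by (rule M_projector_perm[OF p C1 Q1])
    then have "(\<lambda>x. row_mult x (proj n ?M C2)) ` carrier_vec n = perm_vec p n ` C1"
      by (rule M_projector_row_space[OF gen_matrix_perm[OF g1 p] M nondegenerate_on_perm[OF p C1 nd1]])
    moreover have "(\<lambda>x. row_mult x (proj n ?M C2)) ` carrier_vec n = C2"
      by (rule M_projector_row_space[OF g2 M nd2 Q2])
    ultimately have "C2 = code_perm C1 (perm_mat n p)" using code_perm_perm_mat[OF p C1] by simp
    then show "perm_equiv n C1 C2" unfolding perm_equiv_def is_perm_mat_def using p by blast
  qed
qed

lemma perm_class_eq:
  fixes C :: "'a::field vec set"
  assumes "C \<subseteq> carrier_vec n"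
  shows "perm_class n C = {perm_vec p n ` C | p. p permutes {..<n}}"
  unfolding perm_class_def is_perm_mat_def using code_perm_perm_mat assms by blast

lemma mem_perm_class_self:
  fixes C :: "'a::field vec set"
  assumes C: "C \<subseteq> carrier_vec n"
  shows "C \<in> perm_class n C"
proof -
  have "perm_vec id n ` C = id ` C" using C by (intro image_cong) (auto simp: perm_vec_id)
  then have "perm_vec id n ` C = C" by simp
  then show ?thesis unfolding perm_class_eq[OF C] using permutes_id by blast
qed

lemma GI_reducible_iff_nondegenerate:
  fixes C :: "'a::field vec set"
  assumes g: "gen_matrix n k G C"
  shows "GI_reducible n C \<longleftrightarrow>
    (\<exists>a b. a \<noteq> 0 \<and> a + of_nat n * b \<noteq> 0 \<and> nondegenerate_on n (struct_mat a b n) C)"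
proof -
  have C: "C \<subseteq> carrier_vec n" by (rule gen_matrix_subset_carrier[OF g])
  have class_member: "\<exists>G'. gen_matrix n k G' C' \<and>
      (nondegenerate_on n (struct_mat a b n) C \<longrightarrow> nondegenerate_on n (struct_mat a b n) C')"
    if "C' \<in> perm_class n C" for C' a b
    using that gen_matrix_perm[OF g] nondegenerate_on_perm[OF _ C] unfolding perm_class_eq[OF C] by blast
  show ?thesis
    unfolding GI_reducible_def Let_def struct_mat_def[symmetric]
  proof (intro iffI; elim exE conjE)
    fix a b :: 'a
    assume ab: "a \<noteq> 0" "a + of_nat n * b \<noteq> 0"
      and "\<forall>C'\<in>perm_class n C. M_LCD n (struct_mat a b n) C'"
    then have "nondegenerate_on n (struct_mat a b n) C"
      using mem_perm_class_self[OF C] M_LCD_iff_nondegenerate[OF g struct_mat_carrier] by blast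
    then show "\<exists>a b. a \<noteq> 0 \<and> a + of_nat n * b \<noteq> 0 \<and> nondegenerate_on n (struct_mat a b n) C"
      using ab by blast
  next
    fix a b :: 'a
    assume ab: "a \<noteq> 0" "a + of_nat n * b \<noteq> 0" and nd: "nondegenerate_on n (struct_mat a b n) C"
    have "M_LCD n (struct_mat a b n) C'" if "C' \<in> perm_class n C" for C'
      using class_member[OF that] nd M_LCD_iff_nondegenerate[OF _ struct_mat_carrier] by blast
    moreover have "perm_equiv n C1 C2 \<longleftrightarrow>
        proj_equiv n (proj n (struct_mat a b n) C1) (proj n (struct_mat a b n) C2)"
      if "C1 \<in> perm_class n C" "C2 \<in> perm_class n C" for C1 C2
      using class_member[OF that(1)] class_member[OF that(2)] nd perm_equiv_iff_proj_equiv by blast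
    ultimately show "\<exists>a b. a \<noteq> 0 \<and> a + of_nat n * b \<noteq> 0 \<and>
        (\<forall>C'\<in>perm_class n C. M_LCD n (struct_mat a b n) C') \<and>
        (\<forall>C1\<in>perm_class n C. \<forall>C2\<in>perm_class n C. perm_equiv n C1 C2 \<longleftrightarrow>
          proj_equiv n (proj n (struct_mat a b n) C1) (proj n (struct_mat a b n) C2))"
      using ab by blast
  qed
qed

lemma image_index_0_carrier_vec_1: "(\<lambda>u. u $ 0) ` carrier_vec 1 = UNIV"
proof -
  have "t = vec 1 (\<lambda>_. t) $ 0" "vec 1 (\<lambda>_. t) \<in> carrier_vec 1" for t :: 'a by auto
  then show ?thesis by blast
qed

lemma linear_code_1_imp_line:
  fixes V :: "'a::field vec set"
  assumes "linear_code n 1 V"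
  shows "\<exists>h\<in>carrier_vec n. h \<noteq> 0\<^sub>v n \<and> V = range (\<lambda>t. t \<cdot>\<^sub>v h)"
proof -
  obtain G where g: "gen_matrix n 1 G V" using assms unfolding linear_code_def by blast
  have G: "G \<in> carrier_mat 1 n" and V: "V = (\<lambda>u. row_mult u G) ` carrier_vec 1"
    and inj: "inj_on (\<lambda>u. row_mult u G) (carrier_vec 1)"
    using gen_matrixD[OF g] by auto
  have row_mult_G: "row_mult u G = (u $ 0) \<cdot>\<^sub>v row G 0" if "u \<in> carrier_vec 1" for u
    by (rule row_mult_carrier_mat_1[OF G that])
  have "row G 0 \<noteq> 0\<^sub>v n"
  proof
    assume "row G 0 = 0\<^sub>v n"
    then have "row_mult u G = 0\<^sub>v n" if "u \<in> carrier_vec 1" for u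
      using row_mult_G[OF that] by (auto intro!: eq_vecI)
    then have "row_mult (unit_vec 1 0) G = row_mult (0\<^sub>v 1) G" by simp
    then have "unit_vec 1 0 = (0\<^sub>v 1 :: 'a vec)" using inj_onD[OF inj] by simp
    then have "unit_vec 1 0 $ 0 = (0\<^sub>v 1 :: 'a vec) $ 0" by simp
    then show False by simp
  qed
  moreover have "V = range (\<lambda>t. t \<cdot>\<^sub>v row G 0)"
  proof -
    have "V = (\<lambda>t. t \<cdot>\<^sub>v row G 0) ` ((\<lambda>u. u $ 0) ` carrier_vec 1)"
      unfolding V image_image using row_mult_G by simp
    also have "(\<lambda>u. u $ 0) ` carrier_vec 1 = (UNIV :: 'a set)"
      by (rule image_index_0_carrier_vec_1)
    finally show ?thesis .
  qed
  moreover have "row G 0 \<in> carrier_vec n" using G by auto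
  ultimately show ?thesis by blast
qed

lemma line_imp_linear_code_1:
  fixes h :: "'a::field vec"
  assumes h: "h \<in> carrier_vec n" "h \<noteq> 0\<^sub>v n"
  shows "linear_code n 1 (range (\<lambda>t. t \<cdot>\<^sub>v h))"
proof -
  let ?H = "mat_of_row h"
  have H: "?H \<in> carrier_mat 1 n" using h by simp
  have row_mult_H: "row_mult u ?H = (u $ 0) \<cdot>\<^sub>v h" if "u \<in> carrier_vec 1" for u
    using row_mult_carrier_mat_1[OF H that] by simp
  have "\<exists>j<n. h $ j \<noteq> 0"
  proof (rule ccontr)
    assume "\<not> (\<exists>j<n. h $ j \<noteq> 0)"
    then have "h = 0\<^sub>v n" using h(1) by (intro eq_vecI) auto
    then show False using h(2) by simp
  qed
  then obtain j where j: "j < n" "h $ j \<noteq> 0" by blast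
  have "inj_on (\<lambda>u. row_mult u ?H) (carrier_vec 1)"
  proof (rule inj_onI)
    fix u v :: "'a vec" assume u: "u \<in> carrier_vec 1" and v: "v \<in> carrier_vec 1"
      and "row_mult u ?H = row_mult v ?H"
    then have "((u $ 0) \<cdot>\<^sub>v h) $ j = ((v $ 0) \<cdot>\<^sub>v h) $ j" using row_mult_H by simp
    then have "(u $ 0) * h $ j = (v $ 0) * h $ j" using j h by simp
    then have "u $ 0 = v $ 0" using j by simp
    then show "u = v" using u v by (intro eq_vecI) auto
  qed
  moreover have "(\<lambda>u. row_mult u ?H) ` carrier_vec 1 = range (\<lambda>t. t \<cdot>\<^sub>v h)"
  proof -
    have "(\<lambda>u. row_mult u ?H) ` carrier_vec 1 = (\<lambda>t. t \<cdot>\<^sub>v h) ` ((\<lambda>u. u $ 0) ` carrier_vec 1)"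
      unfolding image_image using row_mult_H by simp
    also have "(\<lambda>u. u $ 0) ` carrier_vec 1 = (UNIV :: 'a set)"
      by (rule image_index_0_carrier_vec_1)
    finally show ?thesis .
  qed
  ultimately show ?thesis unfolding linear_code_def gen_matrix_def using H by blast
qed

lemma code_hull_iff:
  "z \<in> code_hull n C \<longleftrightarrow> z \<in> C \<and> z \<in> carrier_vec n \<and> (\<forall>x\<in>C. x \<bullet> z = 0)"
  unfolding code_hull_def dual_code_def by auto

lemma code_hull_zero_mem:
  fixes C :: "'a::field vec set"
  assumes "gen_matrix n k G C"
  shows "0\<^sub>v n \<in> code_hull n C"
  using gen_matrix_zero_mem[OF assms] gen_matrix_subset_carrier[OF assms]
  unfolding code_hull_iff by auto

lemma code_hull_diff_mem:
  fixes C :: "'a::field vec set"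
  assumes g: "gen_matrix n k G C" and x: "x \<in> code_hull n C" and y: "y \<in> code_hull n C"
  shows "x - y \<in> code_hull n C"
proof -
  have C: "C \<subseteq> carrier_vec n" by (rule gen_matrix_subset_carrier[OF g])
  have "c \<bullet> (x - y) = 0" if "c \<in> C" for c
    using scalar_prod_minus_distrib[of c n x y] that C x y unfolding code_hull_iff by auto
  then show ?thesis using gen_matrix_diff_mem[OF g] x y unfolding code_hull_iff by auto
qed

lemma code_hull_smult_mem:
  fixes C :: "'a::field vec set"
  assumes g: "gen_matrix n k G C" and x: "x \<in> code_hull n C"
  shows "t \<cdot>\<^sub>v x \<in> code_hull n C"
proof -
  have C: "C \<subseteq> carrier_vec n" by (rule gen_matrix_subset_carrier[OF g])
  have "c \<bullet> (t \<cdot>\<^sub>v x) = 0" if "c \<in> C" for c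
    using that C x unfolding code_hull_iff by auto
  then show ?thesis using gen_matrix_smult_mem[OF g] x unfolding code_hull_iff by auto
qed

lemma code_hull_eq_zero_if_orthogonal_ones:
  fixes C :: "'a::field vec set"
  assumes C: "C \<subseteq> carrier_vec n" and nd: "nondegenerate_on n (struct_mat a b n) C"
    and z: "z \<in> code_hull n C" "z \<bullet> ones_vec n = 0"
  shows "z = 0\<^sub>v n"
proof -
  have "x \<bullet> (struct_mat a b n *\<^sub>v z) = 0" if "x \<in> C" for x
  proof -
    have "x \<in> carrier_vec n" "z \<in> carrier_vec n" using that z C unfolding code_hull_iff by auto
    then show ?thesis using z that struct_mat_form[of x n z a b] unfolding code_hull_iff by simp
  qed
  then show ?thesis using nd z unfolding nondegenerate_on_def code_hull_iff by blast
qed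

lemma code_hull_eq_line:
  fixes C :: "'a::field vec set"
  assumes g: "gen_matrix n k G C" and h: "h \<in> code_hull n C" "h \<bullet> ones_vec n \<noteq> 0"
    and trivial: "\<And>z. z \<in> code_hull n C \<Longrightarrow> z \<bullet> ones_vec n = 0 \<Longrightarrow> z = 0\<^sub>v n"
  shows "code_hull n C = range (\<lambda>t. t \<cdot>\<^sub>v h)"
proof (intro equalityI subsetI)
  fix y assume y: "y \<in> code_hull n C"
  have yc: "y \<in> carrier_vec n" and hc: "h \<in> carrier_vec n" using y h unfolding code_hull_iff by auto
  define t where "t = (y \<bullet> ones_vec n) / (h \<bullet> ones_vec n)"
  have "(y - t \<cdot>\<^sub>v h) \<bullet> ones_vec n = y \<bullet> ones_vec n - t * (h \<bullet> ones_vec n)"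
    using minus_scalar_prod_distrib[of y n "t \<cdot>\<^sub>v h" "ones_vec n"] yc hc by simp
  also have "\<dots> = 0" unfolding t_def using h(2) by simp
  finally have "y - t \<cdot>\<^sub>v h = 0\<^sub>v n"
    using trivial code_hull_diff_mem[OF g y code_hull_smult_mem[OF g h(1)]] by blast
  then have "y = t \<cdot>\<^sub>v h" using minus_vec_eq_zero_iff[OF yc] hc by simp
  then show "y \<in> range (\<lambda>t. t \<cdot>\<^sub>v h)" by blast
qed (use code_hull_smult_mem[OF g h(1)] in auto)

lemma line_eq_zero_if_orthogonal:
  fixes h :: "'a::field vec"
  assumes V: "V = range (\<lambda>t. t \<cdot>\<^sub>v h)" and hw: "h \<in> carrier_vec n" "w \<in> carrier_vec n"
    and x: "x \<in> V" "x \<bullet> w \<noteq> 0" and y: "y \<in> V" "y \<bullet> w = 0"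
  shows "y = 0\<^sub>v n"
proof -
  obtain s t where "x = s \<cdot>\<^sub>v h" "y = t \<cdot>\<^sub>v h" using V x y by blast
  then have "s * (h \<bullet> w) \<noteq> 0" "t * (h \<bullet> w) = 0" using x y hw by auto
  then have "t = 0" by simp
  then show ?thesis using \<open>y = t \<cdot>\<^sub>v h\<close> hw by auto
qed

lemma LCD_or_hull_line_if_nondegenerate:
  fixes C :: "'a::field vec set"
  assumes g: "gen_matrix n k G C" and nd: "nondegenerate_on n (struct_mat a b n) C"
  shows "LCD n C \<or> (linear_code n 1 (code_hull n C) \<and> (\<exists>x\<in>code_hull n C. x \<bullet> ones_vec n \<noteq> 0))"
proof (cases "LCD n C")
  case False
  have "\<exists>h\<in>code_hull n C. h \<noteq> 0\<^sub>v n"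
  proof (rule ccontr)
    assume "\<not> (\<exists>h\<in>code_hull n C. h \<noteq> 0\<^sub>v n)"
    then have "code_hull n C = {0\<^sub>v n}" using code_hull_zero_mem[OF g] by blast
    then show False using False unfolding LCD_def by (rule notE[rotated])
  qed
  then obtain h where h: "h \<in> code_hull n C" "h \<noteq> 0\<^sub>v n" by blast
  have trivial: "z = 0\<^sub>v n" if "z \<in> code_hull n C" "z \<bullet> ones_vec n = 0" for z
    by (rule code_hull_eq_zero_if_orthogonal_ones[OF gen_matrix_subset_carrier[OF g] nd that])
  have h1: "h \<bullet> ones_vec n \<noteq> 0" using trivial[OF h(1)] h(2) by blast
  have hc: "h \<in> carrier_vec n" using h(1) unfolding code_hull_iff by blast
  have "code_hull n C = range (\<lambda>t. t \<cdot>\<^sub>v h)"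
    by (rule code_hull_eq_line[OF g h(1) h1 trivial])
  then have "linear_code n 1 (code_hull n C)" using line_imp_linear_code_1[OF hc h(2)] by simp
  then show ?thesis using h(1) h1 by blast
qed (rule disjI1)

lemma nondegenerate_if_LCD:
  fixes C :: "'a::field vec set"
  assumes C: "C \<subseteq> carrier_vec n" and "LCD n C"
  shows "nondegenerate_on n (struct_mat 1 0 n) C"
  unfolding nondegenerate_on_def
proof (intro ballI impI)
  fix y assume y: "y \<in> C" and orth: "\<forall>x\<in>C. x \<bullet> (struct_mat 1 0 n *\<^sub>v y) = 0"
  have "x \<bullet> y = 0" if "x \<in> C" for x
  proof -
    have "x \<in> carrier_vec n" "y \<in> carrier_vec n" using that y C by auto
    then show ?thesis using orth that struct_mat_form[of x n y 1 0] by simp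
  qed
  then have "y \<in> code_hull n C" using y C unfolding code_hull_iff by auto
  then show "y = 0\<^sub>v n" using \<open>LCD n C\<close> unfolding LCD_def by blast
qed

lemma nondegenerate_if_hull_line:
  fixes C :: "'a::field vec set"
  assumes C: "C \<subseteq> carrier_vec n" and line: "linear_code n 1 (code_hull n C)"
    and h: "h \<in> code_hull n C" "h \<bullet> ones_vec n \<noteq> 0" and b: "b \<noteq> 0"
  shows "nondegenerate_on n (struct_mat 1 b n) C"
  unfolding nondegenerate_on_def
proof (intro ballI impI)
  fix y assume y: "y \<in> C" and orth: "\<forall>x\<in>C. x \<bullet> (struct_mat 1 b n *\<^sub>v y) = 0"
  have yc: "y \<in> carrier_vec n" and hc: "h \<in> carrier_vec n" using y h C unfolding code_hull_iff by auto
  have form: "x \<bullet> y + b * ((x \<bullet> ones_vec n) * (y \<bullet> ones_vec n)) = 0" if "x \<in> C" for x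
  proof -
    have "x \<in> carrier_vec n" using that C by auto
    then show ?thesis using orth that struct_mat_form[OF _ yc, of x 1 b] by simp
  qed
  have "h \<bullet> y = 0" using h y comm_scalar_prod[OF hc yc] unfolding code_hull_iff by auto
  then have y1: "y \<bullet> ones_vec n = 0" using form[of h] h b unfolding code_hull_iff by auto
  moreover have "y \<in> code_hull n C" using form y yc y1 unfolding code_hull_iff by auto
  moreover obtain h0 where "code_hull n C = range (\<lambda>t. t \<cdot>\<^sub>v h0)" "h0 \<in> carrier_vec n"
    using linear_code_1_imp_line[OF line] by blast
  ultimately show "y = 0\<^sub>v n" using line_eq_zero_if_orthogonal[OF _ _ ones_vec_carrier h] by blast
qed

lemma zero_or_one_if_no_admissible_coeff:
  fixes c :: "'a::field"
  assumes all: "\<And>b::'a. b \<noteq> 0 \<Longrightarrow> 1 + of_nat n * b = 0"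
  shows "c = 0 \<or> c = 1"
proof -
  have "c = 1" if "c \<noteq> 0"
  proof -
    have "1 + of_nat n * c = 1 + of_nat n * (1 :: 'a)" using all[OF that] all[of 1] by simp
    then have "of_nat n * c = of_nat n * (1 :: 'a)" by (rule add_left_imp_eq)
    moreover have "(of_nat n :: 'a) \<noteq> 0" using all[of 1] by auto
    ultimately show "c = 1" by simp
  qed
  then show ?thesis by blast
qed

(* Only over GF(2) is there no admissible b; there c * c = c, so (h,1) = (h,h). *)
lemma exists_admissible_coeff:
  fixes h :: "'a::field vec"
  assumes h: "h \<in> carrier_vec n" "h \<bullet> h = 0" "h \<bullet> ones_vec n \<noteq> 0"
  shows "\<exists>b::'a. b \<noteq> 0 \<and> 1 + of_nat n * b \<noteq> 0"
proof (rule ccontr)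
  assume "\<nexists>b::'a. b \<noteq> 0 \<and> 1 + of_nat n * b \<noteq> 0"
  then have idem: "c * c = c" for c :: 'a
    using zero_or_one_if_no_admissible_coeff[of n c] by auto
  have "h \<bullet> ones_vec n = (\<Sum>i = 0..<n. h $ i * h $ i)"
    unfolding scalar_prod_def ones_vec_def idem using h(1) by (intro sum.cong) auto
  also have "\<dots> = h \<bullet> h" unfolding scalar_prod_def using h(1) by simp
  finally show False using h by simp
qed

theorem mainTheorem2:
  fixes C :: "'a::{field,finite} vec set" and n k :: nat
  assumes "linear_code n k C"
  shows "GI_reducible n C \<longleftrightarrow>
           (LCD n C \<or>
            (linear_code n 1 (code_hull n C) \<and> (\<exists>x\<in>code_hull n C. x \<bullet> ones_vec n \<noteq> 0)))"
proof -
  obtain G where g: "gen_matrix n k G C" using assms unfolding linear_code_def by blast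
  have C: "C \<subseteq> carrier_vec n" by (rule gen_matrix_subset_carrier[OF g])
  show ?thesis
    unfolding GI_reducible_iff_nondegenerate[OF g]
  proof (intro iffI; (elim exE conjE disjE)?)
    fix a b :: 'a
    assume "nondegenerate_on n (struct_mat a b n) C"
    then show "LCD n C \<or> (linear_code n 1 (code_hull n C) \<and> (\<exists>x\<in>code_hull n C. x \<bullet> ones_vec n \<noteq> 0))"
      by (rule LCD_or_hull_line_if_nondegenerate[OF g])
  next
    assume "LCD n C"
    then have "nondegenerate_on n (struct_mat 1 0 n) C" by (rule nondegenerate_if_LCD[OF C])
    then show "\<exists>a b::'a. a \<noteq> 0 \<and> a + of_nat n * b \<noteq> 0 \<and> nondegenerate_on n (struct_mat a b n) C"
      by (intro exI[of _ 1] exI[of _ 0]) simp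
  next
    assume line: "linear_code n 1 (code_hull n C)" and "\<exists>x\<in>code_hull n C. x \<bullet> ones_vec n \<noteq> 0"
    then obtain h where h: "h \<in> code_hull n C" "h \<bullet> ones_vec n \<noteq> 0" by blast
    then have "h \<in> carrier_vec n" "h \<bullet> h = 0" unfolding code_hull_iff by auto
    then obtain b :: 'a where b: "b \<noteq> 0" "1 + of_nat n * b \<noteq> 0"
      using exists_admissible_coeff h(2) by blast
    then have "nondegenerate_on n (struct_mat 1 b n) C" using nondegenerate_if_hull_line[OF C line h] by blast
    then show "\<exists>a b::'a. a \<noteq> 0 \<and> a + of_nat n * b \<noteq> 0 \<and> nondegenerate_on n (struct_mat a b n) C"
      using b by (intro exI[of _ 1] exI[of _ b]) simp
  qed
qed

end
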